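(* For all $n\ge 1$, $|F_n(321,3124,4123)|=F_{n+1}-1$, where $F_n$ is the $n$-th Fibonacci number with $F_0=F_1=1$ and $F_n=F_{n-1}+F_{n-2}$ for $n\ge 2$.
   Context: A permutation $\pi$ avoids a classical pattern $p\in S_k$ if no subsequence of $\pi$ of length $k$ is order-isomorphic to $p$. A Fishburn permutation is a permutation $\pi=\pi_1\cdots\pi_n$ of $[n]$ for which there are no indices $i<j$ with $\pi_j<\pi_i<\pi_{i+1}$ and $\pi_i=\pi_j+1$. $F_n(\sigma_1,\dots,\sigma_k)$ denotes the set of Fishburn permutations of length $n$ avoiding each of the classical patterns $\sigma_1,\dots,\sigma_k$. *)

theory Defs
  imports Main
begin

(* A permutation of [n] is represented as a list of length n whose entries are
   exactly 1..n (each once).  Positions are 0-based list indices. *)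
definition perm_of :: "nat \<Rightarrow> nat list \<Rightarrow> bool" where
  "perm_of n \<pi> \<longleftrightarrow> distinct \<pi> \<and> set \<pi> = {1..n}"

definition contains :: "nat list \<Rightarrow> nat list \<Rightarrow> bool" where
  "contains \<pi> p \<longleftrightarrow> (\<exists>idx :: nat \<Rightarrow> nat.
      (\<forall>a b. a < b \<and> b < length p \<longrightarrow> idx a < idx b) \<and>
      (\<forall>a < length p. idx a < length \<pi>) \<and>
      (\<forall>a < length p. \<forall>b < length p.
          (\<pi> ! idx a < \<pi> ! idx b) \<longleftrightarrow> (p ! a < p ! b)))"

definition avoids :: "nat list \<Rightarrow> nat list \<Rightarrow> bool" where
  "avoids \<pi> p \<longleftrightarrow> \<not> contains \<pi> p"

definition fishburn :: "nat list \<Rightarrow> bool" where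
  "fishburn \<pi> \<longleftrightarrow> \<not> (\<exists>i j. i < j \<and> j < length \<pi> \<and> i + 1 < length \<pi> \<and>
      \<pi> ! j < \<pi> ! i \<and> \<pi> ! i < \<pi> ! (i + 1) \<and> \<pi> ! i = \<pi> ! j + 1)"

definition Fish_av :: "nat \<Rightarrow> nat list list \<Rightarrow> nat list set" where
  "Fish_av n ps = {\<pi>. perm_of n \<pi> \<and> fishburn \<pi> \<and> (\<forall>p \<in> set ps. avoids \<pi> p)}"

fun fib1 :: "nat \<Rightarrow> nat" where
  "fib1 0 = 1"
| "fib1 (Suc 0) = 1"
| "fib1 (Suc (Suc n)) = fib1 (Suc n) + fib1 n"

end

theory Submission
  imports Defs
begin

text \<open>Sort a permutation in \<open>F\<^sub>n(321, 3124, 4123)\<close> by its first entry. A first entry \<open>\<ge> 4\<close> is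
impossible: the entries \<open>1, 2, 3\<close> that follow it form a \<open>321\<close> or a \<open>4123\<close>. If it starts with
\<open>1\<close>, or with \<open>2\<close> (then the Fishburn condition forces \<open>1\<close> next), it is the direct sum of \<open>1\<close>
resp. \<open>21\<close> with an arbitrary permutation of the same class, since every pattern starts above its
third entry and so cannot start inside such a prefix. If it starts with \<open>3\<close>, the Fishburn
condition, \<open>321\<close> and \<open>3124\<close> force it to be \<open>3 1 4 5 \<dots> n 2\<close>. Hence
\<open>|F\<^sub>n| = |F\<^sub>n\<^sub>-\<^sub>1| + |F\<^sub>n\<^sub>-\<^sub>2| + 1\<close> for \<open>n \<ge> 3\<close>, with \<open>|F\<^sub>1| = 1\<close> and \<open>|F\<^sub>2| = 2\<close>.\<close>

definition direct_sum :: "nat list \<Rightarrow> nat list \<Rightarrow> nat list" (infixr \<open>\<oplus>\<close> 65) where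
  "\<alpha> \<oplus> \<beta> = \<alpha> @ map (\<lambda>x. x + length \<alpha>) \<beta>"

lemma length_direct_sum [simp]: "length (\<alpha> \<oplus> \<beta>) = length \<alpha> + length \<beta>"
  by (simp add: direct_sum_def)

lemma nth_direct_sum:
  "i < length \<alpha> + length \<beta> \<Longrightarrow>
   (\<alpha> \<oplus> \<beta>) ! i = (if i < length \<alpha> then \<alpha> ! i else \<beta> ! (i - length \<alpha>) + length \<alpha>)"
  by (simp add: direct_sum_def nth_append)

lemma inj_on_direct_sum: "inj_on ((\<oplus>) \<alpha>) A"
  by (rule inj_onI) (simp add: direct_sum_def inj_map_eq_map inj_def)

lemma perm_of_length: "perm_of n \<pi> \<Longrightarrow> length \<pi> = n"
  unfolding perm_of_def by (metis card_atLeastAtMost diff_Suc_1 distinct_card)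

lemma perm_of_nth_mem: "perm_of n \<pi> \<Longrightarrow> i < n \<Longrightarrow> \<pi> ! i \<in> {1..n}"
  using perm_of_length unfolding perm_of_def by (metis nth_mem)

lemma perm_of_nth_eq_iff: "perm_of n \<pi> \<Longrightarrow> i < n \<Longrightarrow> j < n \<Longrightarrow> \<pi> ! i = \<pi> ! j \<longleftrightarrow> i = j"
  using perm_of_length unfolding perm_of_def by (metis nth_eq_iff_index_eq)

lemma perm_of_index:
  assumes "perm_of n \<pi>" "v \<in> {1..n}"
  obtains i where "i < n" "\<pi> ! i = v"
  using assms perm_of_length unfolding perm_of_def by (metis in_set_conv_nth)

lemma perm_of_direct_sum:
  assumes "perm_of (length \<alpha>) \<alpha>" "length \<alpha> \<le> n"
  shows "perm_of n (\<alpha> \<oplus> \<beta>) \<longleftrightarrow> perm_of (n - length \<alpha>) \<beta>"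
proof -
  let ?k = "length \<alpha>" and ?B = "(\<lambda>x. x + length \<alpha>) ` set \<beta>"
  have \<alpha>: "set \<alpha> = {1..?k}" "distinct \<alpha>" using assms(1) unfolding perm_of_def by auto
  have split: "{1..n} = {1..?k} \<union> {?k + 1..n}" "{1..?k} \<inter> {?k + 1..n} = {}"
    using assms(2) by auto
  have "perm_of n (\<alpha> \<oplus> \<beta>) \<longleftrightarrow> distinct \<beta> \<and> {1..?k} \<inter> ?B = {} \<and> {1..?k} \<union> ?B = {1..n}"
    unfolding perm_of_def direct_sum_def using \<alpha> by (auto simp: distinct_map inj_on_def)
  also have "\<dots> \<longleftrightarrow> distinct \<beta> \<and> ?B = {?k + 1..n}"
    using split by blast
  also have "?B = {?k + 1..n} \<longleftrightarrow> ?B = (\<lambda>x. x + ?k) ` {1..n - ?k}"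
    using assms(2) by simp
  also have "\<dots> \<longleftrightarrow> set \<beta> = {1..n - ?k}"
    by (rule inj_image_eq_iff) (simp add: inj_on_def)
  finally show ?thesis unfolding perm_of_def by blast
qed

lemma direct_sum_take_drop:
  assumes "perm_of n \<pi>" "k \<le> n" "set (take k \<pi>) = {1..k}"
  shows "\<pi> = take k \<pi> \<oplus> map (\<lambda>x. x - k) (drop k \<pi>)"
proof -
  have len: "length (take k \<pi>) = k" using perm_of_length[OF assms(1)] assms(2) by simp
  have above: "k < x" if "x \<in> set (drop k \<pi>)" for x
  proof -
    have "distinct (take k \<pi> @ drop k \<pi>)" using assms(1) unfolding perm_of_def by simp
    then have "x \<notin> {1..k}" using that assms(3) by (auto simp del: append_take_drop_id)
    moreover have "x \<in> {1..n}" using that assms(1) unfolding perm_of_def by (metis in_set_dropD)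
    ultimately show ?thesis by simp
  qed
  have "map (\<lambda>x. x - k + k) (drop k \<pi>) = drop k \<pi>"
  proof (rule map_idI)
    fix x assume "x \<in> set (drop k \<pi>)"
    then show "x - k + k = x" using above[of x] by simp
  qed
  then show ?thesis unfolding direct_sum_def len by (simp add: comp_def)
qed

definition fishburn_pattern_at :: "nat list \<Rightarrow> nat \<Rightarrow> nat \<Rightarrow> bool" where
  "fishburn_pattern_at \<pi> i j \<longleftrightarrow> i < j \<and> j < length \<pi> \<and> i + 1 < length \<pi> \<and>
     \<pi> ! j < \<pi> ! i \<and> \<pi> ! i < \<pi> ! (i + 1) \<and> \<pi> ! i = \<pi> ! j + 1"

lemma fishburn_iff: "fishburn \<pi> \<longleftrightarrow> (\<forall>i j. \<not> fishburn_pattern_at \<pi> i j)"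
  unfolding fishburn_def fishburn_pattern_at_def by blast

lemma fishburn_no_ascent_after:
  assumes "fishburn \<pi>" "i < j" "j < length \<pi>" "i + 1 < length \<pi>" "\<pi> ! i = \<pi> ! j + 1"
  shows "\<not> \<pi> ! i < \<pi> ! (i + 1)"
proof
  assume "\<pi> ! i < \<pi> ! (i + 1)"
  moreover have "\<pi> ! j < \<pi> ! i" using assms(5) by simp
  ultimately show False using assms unfolding fishburn_def by blast
qed

lemma fishburn_pattern_at_direct_sum:
  assumes "\<forall>x\<in>set \<alpha>. x \<le> length \<alpha>"
  shows "fishburn_pattern_at (\<alpha> \<oplus> \<beta>) i j \<longleftrightarrow>
    fishburn_pattern_at \<alpha> i j \<or>
    length \<alpha> \<le> i \<and> fishburn_pattern_at \<beta> (i - length \<alpha>) (j - length \<alpha>)"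
proof (cases "i < length \<alpha>")
  case True
  have "j < length \<alpha>" if "fishburn_pattern_at (\<alpha> \<oplus> \<beta>) i j"
  proof (rule ccontr)
    \<comment> \<open>entries coming from \<open>\<beta>\<close> lie above all entries of \<open>\<alpha>\<close>\<close>
    assume "\<not> j < length \<alpha>"
    moreover have "\<alpha> ! i \<le> length \<alpha>" using True assms by simp
    ultimately have "(\<alpha> \<oplus> \<beta>) ! i \<le> (\<alpha> \<oplus> \<beta>) ! j"
      using that True by (auto simp: fishburn_pattern_at_def nth_direct_sum)
    with that show False by (simp add: fishburn_pattern_at_def)
  qed
  then show ?thesis
    using True unfolding fishburn_pattern_at_def by (auto simp: nth_direct_sum)
next
  case False
  then have "Suc i - length \<alpha> = Suc (i - length \<alpha>)" by simp
  with False show ?thesis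
    unfolding fishburn_pattern_at_def by (auto simp: nth_direct_sum)
qed

lemma fishburn_direct_sum:
  assumes "\<forall>x\<in>set \<alpha>. x \<le> length \<alpha>"
  shows "fishburn (\<alpha> \<oplus> \<beta>) \<longleftrightarrow> fishburn \<alpha> \<and> fishburn \<beta>"
  unfolding fishburn_iff fishburn_pattern_at_direct_sum[OF assms]
  by (metis add_diff_cancel_right' le_add2)

lemma containsE:
  assumes "contains \<pi> p"
  obtains idx where "\<And>a b. a < b \<Longrightarrow> b < length p \<Longrightarrow> idx a < idx b"
    and "\<And>a. a < length p \<Longrightarrow> idx a < length \<pi>"
    and "\<And>a b. a < length p \<Longrightarrow> b < length p \<Longrightarrow> \<pi> ! idx a < \<pi> ! idx b \<longleftrightarrow> p ! a < p ! b"
  using assms unfolding contains_def by blast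

lemma contains_direct_sum:
  assumes "\<forall>x\<in>set \<alpha>. x \<le> length \<alpha>" and a: "a < length p" "length \<alpha> \<le> a" "p ! a < p ! 0"
  shows "contains (\<alpha> \<oplus> \<beta>) p \<longleftrightarrow> contains \<beta> p"
proof
  let ?k = "length \<alpha>"
  assume "contains (\<alpha> \<oplus> \<beta>) p"
  then obtain idx where mono: "\<forall>b c. b < c \<and> c < length p \<longrightarrow> idx b < idx c"
    and bound: "\<forall>b < length p. idx b < ?k + length \<beta>"
    and order: "\<forall>b < length p. \<forall>c < length p. (\<alpha> \<oplus> \<beta>) ! idx b < (\<alpha> \<oplus> \<beta>) ! idx c \<longleftrightarrow> p ! b < p ! c"
    unfolding contains_def by auto
  have idx_ge: "b \<le> idx b" if "b < length p" for b
    using that by (induction b) (auto simp: mono Suc_le_eq intro: le_less_trans)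
  \<comment> \<open>an occurrence starting inside \<open>\<alpha>\<close> would need an entry of \<open>\<beta>\<close> below an entry of \<open>\<alpha>\<close>\<close>
  have "?k \<le> idx 0"
  proof (rule ccontr)
    assume "\<not> ?k \<le> idx 0"
    then have "(\<alpha> \<oplus> \<beta>) ! idx 0 \<le> ?k" using assms(1) by (simp add: nth_direct_sum)
    also have "?k \<le> (\<alpha> \<oplus> \<beta>) ! idx a"
      using idx_ge[of a] a bound by (simp add: nth_direct_sum)
    finally have "\<not> (\<alpha> \<oplus> \<beta>) ! idx a < (\<alpha> \<oplus> \<beta>) ! idx 0" by simp
    moreover have "0 < length p" using a(1) by linarith
    ultimately show False using order a(1,3) by blast
  qed
  then have ge: "?k \<le> idx b" if "b < length p" for b
    using that mono by (metis le_less_trans less_imp_le_nat not_le not_gr_zero)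
  show "contains \<beta> p" unfolding contains_def
  proof (intro exI[of _ "\<lambda>b. idx b - ?k"] conjI allI impI)
    fix b c assume "b < c \<and> c < length p"
    then show "idx b - ?k < idx c - ?k" using mono ge by (meson diff_less_mono order.strict_trans)
  next
    fix b assume "b < length p"
    then show "idx b - ?k < length \<beta>" using bound ge by fastforce
  next
    fix b c assume bc: "b < length p" "c < length p"
    then show "\<beta> ! (idx b - ?k) < \<beta> ! (idx c - ?k) \<longleftrightarrow> p ! b < p ! c"
      using order[rule_format, OF bc] ge[OF bc(1)] ge[OF bc(2)] bound bc by (simp add: nth_direct_sum)
  qed
next
  let ?k = "length \<alpha>"
  assume "contains \<beta> p"
  then obtain idx where mono: "\<forall>b c. b < c \<and> c < length p \<longrightarrow> idx b < idx c"
    and bound: "\<forall>b < length p. idx b < length \<beta>"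
    and order: "\<forall>b < length p. \<forall>c < length p. \<beta> ! idx b < \<beta> ! idx c \<longleftrightarrow> p ! b < p ! c"
    unfolding contains_def by auto
  show "contains (\<alpha> \<oplus> \<beta>) p" unfolding contains_def
    by (rule exI[of _ "\<lambda>b. idx b + ?k"]) (use mono bound order in \<open>auto simp: nth_direct_sum\<close>)
qed

lemma Fish_av_direct_sum:
  assumes "perm_of (length \<alpha>) \<alpha>" "fishburn \<alpha>" "length \<alpha> \<le> n"
    and "\<forall>p\<in>set ps. \<exists>a<length p. length \<alpha> \<le> a \<and> p ! a < p ! 0"
  shows "\<alpha> \<oplus> \<beta> \<in> Fish_av n ps \<longleftrightarrow> \<beta> \<in> Fish_av (n - length \<alpha>) ps"
proof -
  have small: "\<forall>x\<in>set \<alpha>. x \<le> length \<alpha>" using assms(1) unfolding perm_of_def by simp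
  have "\<forall>p\<in>set ps. contains (\<alpha> \<oplus> \<beta>) p \<longleftrightarrow> contains \<beta> p"
    using assms(4) contains_direct_sum[OF small] by blast
  then show ?thesis
    unfolding Fish_av_def avoids_def
    by (simp add: perm_of_direct_sum[OF assms(1,3)] fishburn_direct_sum[OF small] assms(2))
qed

lemma contains_321_iff:
  "contains \<pi> [3,2,1] \<longleftrightarrow> (\<exists>i j k. i < j \<and> j < k \<and> k < length \<pi> \<and> \<pi> ! k < \<pi> ! j \<and> \<pi> ! j < \<pi> ! i)"
proof
  assume "contains \<pi> [3,2,1]"
  then obtain idx where mono: "\<And>a b. a < b \<Longrightarrow> b < length [3,2,1::nat] \<Longrightarrow> idx a < idx b"
    and bound: "\<And>a. a < length [3,2,1::nat] \<Longrightarrow> idx a < length \<pi>"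
    and order: "\<And>a b. a < length [3,2,1::nat] \<Longrightarrow> b < length [3,2,1::nat] \<Longrightarrow>
      \<pi> ! idx a < \<pi> ! idx b \<longleftrightarrow> [3,2,1::nat] ! a < [3,2,1] ! b"
    by (rule containsE) blast
  show "\<exists>i j k. i < j \<and> j < k \<and> k < length \<pi> \<and> \<pi> ! k < \<pi> ! j \<and> \<pi> ! j < \<pi> ! i"
    using mono[of 0 1] mono[of 1 2] bound[of 2] order[of 2 1] order[of 1 0] by auto
next
  assume "\<exists>i j k. i < j \<and> j < k \<and> k < length \<pi> \<and> \<pi> ! k < \<pi> ! j \<and> \<pi> ! j < \<pi> ! i"
  then obtain i j k where "i < j" "j < k" "k < length \<pi>" "\<pi> ! k < \<pi> ! j" "\<pi> ! j < \<pi> ! i" by blast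
  then show "contains \<pi> [3,2,1]"
    unfolding contains_def by (intro exI[of _ "(!) [i, j, k]"]) (auto simp: less_Suc_eq)
qed

lemma contains_3124_iff:
  "contains \<pi> [3,1,2,4] \<longleftrightarrow> (\<exists>a b c d. a < b \<and> b < c \<and> c < d \<and> d < length \<pi> \<and> \<pi> ! b < \<pi> ! c \<and> \<pi> ! c < \<pi> ! a \<and> \<pi> ! a < \<pi> ! d)"
proof
  assume "contains \<pi> [3,1,2,4]"
  then obtain idx where mono: "\<And>a b. a < b \<Longrightarrow> b < length [3,1,2,4::nat] \<Longrightarrow> idx a < idx b"
    and bound: "\<And>a. a < length [3,1,2,4::nat] \<Longrightarrow> idx a < length \<pi>"
    and order: "\<And>a b. a < length [3,1,2,4::nat] \<Longrightarrow> b < length [3,1,2,4::nat] \<Longrightarrow>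
      \<pi> ! idx a < \<pi> ! idx b \<longleftrightarrow> [3,1,2,4::nat] ! a < [3,1,2,4] ! b"
    by (rule containsE) blast
  show "\<exists>a b c d. a < b \<and> b < c \<and> c < d \<and> d < length \<pi> \<and> \<pi> ! b < \<pi> ! c \<and> \<pi> ! c < \<pi> ! a \<and> \<pi> ! a < \<pi> ! d"
    using mono[of 0 1] mono[of 1 2] mono[of 2 3] bound[of 3] order[of 1 2] order[of 2 0] order[of 0 3] by auto
next
  assume "\<exists>a b c d. a < b \<and> b < c \<and> c < d \<and> d < length \<pi> \<and> \<pi> ! b < \<pi> ! c \<and> \<pi> ! c < \<pi> ! a \<and> \<pi> ! a < \<pi> ! d"
  then obtain a b c d where "a < b" "b < c" "c < d" "d < length \<pi>" "\<pi> ! b < \<pi> ! c" "\<pi> ! c < \<pi> ! a" "\<pi> ! a < \<pi> ! d" by blast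
  then show "contains \<pi> [3,1,2,4]"
    unfolding contains_def by (intro exI[of _ "(!) [a, b, c, d]"]) (auto simp: less_Suc_eq)
qed

lemma contains_4123_iff:
  "contains \<pi> [4,1,2,3] \<longleftrightarrow> (\<exists>a b c d. a < b \<and> b < c \<and> c < d \<and> d < length \<pi> \<and> \<pi> ! b < \<pi> ! c \<and> \<pi> ! c < \<pi> ! d \<and> \<pi> ! d < \<pi> ! a)"
proof
  assume "contains \<pi> [4,1,2,3]"
  then obtain idx where mono: "\<And>a b. a < b \<Longrightarrow> b < length [4,1,2,3::nat] \<Longrightarrow> idx a < idx b"
    and bound: "\<And>a. a < length [4,1,2,3::nat] \<Longrightarrow> idx a < length \<pi>"
    and order: "\<And>a b. a < length [4,1,2,3::nat] \<Longrightarrow> b < length [4,1,2,3::nat] \<Longrightarrow>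
      \<pi> ! idx a < \<pi> ! idx b \<longleftrightarrow> [4,1,2,3::nat] ! a < [4,1,2,3] ! b"
    by (rule containsE) blast
  show "\<exists>a b c d. a < b \<and> b < c \<and> c < d \<and> d < length \<pi> \<and> \<pi> ! b < \<pi> ! c \<and> \<pi> ! c < \<pi> ! d \<and> \<pi> ! d < \<pi> ! a"
    using mono[of 0 1] mono[of 1 2] mono[of 2 3] bound[of 3] order[of 1 2] order[of 2 3] order[of 3 0] by auto
next
  assume "\<exists>a b c d. a < b \<and> b < c \<and> c < d \<and> d < length \<pi> \<and> \<pi> ! b < \<pi> ! c \<and> \<pi> ! c < \<pi> ! d \<and> \<pi> ! d < \<pi> ! a"
  then obtain a b c d where "a < b" "b < c" "c < d" "d < length \<pi>" "\<pi> ! b < \<pi> ! c" "\<pi> ! c < \<pi> ! d" "\<pi> ! d < \<pi> ! a" by blast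
  then show "contains \<pi> [4,1,2,3]"
    unfolding contains_def by (intro exI[of _ "(!) [a, b, c, d]"]) (auto simp: less_Suc_eq)
qed

definition special_perm :: "nat \<Rightarrow> nat list" where
  "special_perm n = 3 # 1 # [4..<n + 1] @ [2]"

lemma length_special_perm: "3 \<le> n \<Longrightarrow> length (special_perm n) = n"
  by (simp add: special_perm_def del: upt_Suc)

lemma nth_special_perm:
  assumes "3 \<le> n" "i < n"
  shows "special_perm n ! i = (if i = 0 then 3 else if i = 1 then 1 else if i = n - 1 then 2 else i + 2)"
proof (cases "i < 2")
  case True
  then show ?thesis using assms by (auto simp: special_perm_def less_2_cases_iff)
next
  case False
  then obtain t where "i = t + 2" by (metis add.commute le_Suc_ex not_less)
  then show ?thesis using assms by (auto simp: special_perm_def nth_append simp del: upt_Suc)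
qed

lemma eq_special_permI:
  assumes "perm_of n \<pi>" "3 \<le> n" "\<pi> ! 0 = 3" "\<pi> ! 1 = 1" "\<pi> ! (n - 1) = 2"
    and increasing: "\<And>i j. 2 \<le> i \<Longrightarrow> i < j \<Longrightarrow> j < n - 1 \<Longrightarrow> \<pi> ! i < \<pi> ! j"
  shows "\<pi> = special_perm n"
proof -
  have len: "length \<pi> = n" using assms(1) by (rule perm_of_length)
  obtain mid where \<pi>: "\<pi> = 3 # 1 # mid @ [2]"
  proof -
    obtain rest where rest: "\<pi> = 3 # 1 # rest" "rest \<noteq> []"
      using len assms(2-4) by (cases \<pi> rule: remdups_adj.cases) (auto simp: Suc_le_eq)
    then have "last rest = 2" using len assms(5) by (auto simp: last_conv_nth nth_Cons')
    with rest show thesis by (metis append_butlast_last_id that)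
  qed
  have "mid ! i < mid ! j" if "i < j" "j < length mid" for i j
  proof -
    have "\<pi> ! (i + 2) < \<pi> ! (j + 2)" using increasing[of "i + 2" "j + 2"] that len \<pi> by simp
    then show ?thesis using that unfolding \<pi> by (simp add: nth_append)
  qed
  then have "sorted_wrt (<) mid" by (simp add: sorted_wrt_iff_nth_less)
  moreover have "set mid = {4..n}"
  proof -
    have "distinct \<pi>" "set \<pi> = {1..n}" using assms(1) unfolding perm_of_def by auto
    moreover have "set \<pi> = {1, 2, 3} \<union> set mid" unfolding \<pi> by auto
    moreover have "{1, 2, 3} \<inter> set mid = {}" if "distinct \<pi>" using that unfolding \<pi> by auto
    ultimately have "set mid = {1..n} - {1, 2, 3}" by blast
    also have "\<dots> = {4..n}" by auto
    finally show ?thesis .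
  qed
  ultimately have "mid = [4..<n + 1]"
    by (intro sorted_distinct_set_unique) (simp_all add: strict_sorted_iff atLeastLessThanSuc_atLeastAtMost del: upt_Suc)
  then show ?thesis unfolding \<pi> special_perm_def by simp
qed

lemma inversion_special_perm:
  "3 \<le> n \<Longrightarrow> a < b \<Longrightarrow> b < n \<Longrightarrow> special_perm n ! b < special_perm n ! a \<Longrightarrow> b = n - 1 \<or> a = 0 \<and> b = 1"
  by (auto simp: nth_special_perm split: if_splits)

lemma special_perm_avoids:
  assumes n: "3 \<le> n"
  shows "\<not> contains (special_perm n) [3,2,1]" "\<not> contains (special_perm n) [3,1,2,4]"
    "\<not> contains (special_perm n) [4,1,2,3]"
proof -
  let ?\<sigma> = "special_perm n"
  show "\<not> contains ?\<sigma> [3,2,1]"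
  proof
    assume "contains ?\<sigma> [3,2,1]"
    then obtain i j k where "i < j" "j < k" "k < n" "?\<sigma> ! k < ?\<sigma> ! j" "?\<sigma> ! j < ?\<sigma> ! i"
      unfolding contains_321_iff length_special_perm[OF n] by blast
    moreover from this have "j = 1" using inversion_special_perm[OF n, of i j] by auto
    ultimately show False using n by (auto simp: nth_special_perm split: if_splits)
  qed
  show "\<not> contains ?\<sigma> [3,1,2,4]"
  proof
    assume "contains ?\<sigma> [3,1,2,4]"
    then obtain a b c d where "a < b" "b < c" "c < d" "d < n"
      "?\<sigma> ! b < ?\<sigma> ! c" "?\<sigma> ! c < ?\<sigma> ! a" "?\<sigma> ! a < ?\<sigma> ! d"
      unfolding contains_3124_iff length_special_perm[OF n] by blast
    moreover from this have "a = 0 \<and> b = 1" using inversion_special_perm[OF n, of a b] by auto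
    ultimately show False using n by (auto simp: nth_special_perm split: if_splits)
  qed
  show "\<not> contains ?\<sigma> [4,1,2,3]"
  proof
    assume "contains ?\<sigma> [4,1,2,3]"
    then obtain a b c d where "a < b" "b < c" "c < d" "d < n"
      "?\<sigma> ! b < ?\<sigma> ! c" "?\<sigma> ! c < ?\<sigma> ! d" "?\<sigma> ! d < ?\<sigma> ! a"
      unfolding contains_4123_iff length_special_perm[OF n] by blast
    moreover from this have "a = 0 \<and> b = 1" using inversion_special_perm[OF n, of a b] by auto
    ultimately show False using n by (auto simp: nth_special_perm split: if_splits)
  qed
qed

abbreviation patterns :: "nat list list" where
  "patterns \<equiv> [[3,2,1], [3,1,2,4], [4,1,2,3]]"

lemma special_perm_in_Fish_av:
  assumes n: "3 \<le> n"
  shows "special_perm n \<in> Fish_av n patterns"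
proof -
  have "perm_of n (special_perm n)"
    unfolding perm_of_def special_perm_def using n by (auto simp del: upt_Suc)
  moreover have "fishburn (special_perm n)"
    unfolding fishburn_def using n by (auto simp: length_special_perm nth_special_perm split: if_splits)
  ultimately show ?thesis using special_perm_avoids[OF n] unfolding Fish_av_def avoids_def by simp
qed

lemma first_entry_le_3:
  assumes perm: "perm_of n \<pi>" and "0 < n" "avoids \<pi> [3,2,1]" "avoids \<pi> [4,1,2,3]"
  shows "\<pi> ! 0 \<le> 3"
proof (rule ccontr)
  assume big: "\<not> \<pi> ! 0 \<le> 3"
  then have "4 \<le> n" using perm_of_nth_mem[OF perm \<open>0 < n\<close>] by auto
  then have mem: "1 \<in> {1..n}" "2 \<in> {1..n}" "3 \<in> {1..n}" by auto
  obtain j1 where "j1 < n" "\<pi> ! j1 = 1" by (rule perm_of_index[OF perm mem(1)])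
  moreover obtain j2 where "j2 < n" "\<pi> ! j2 = 2" by (rule perm_of_index[OF perm mem(2)])
  moreover obtain j3 where "j3 < n" "\<pi> ! j3 = 3" by (rule perm_of_index[OF perm mem(3)])
  ultimately have j: "j1 < n" "\<pi> ! j1 = 1" "j2 < n" "\<pi> ! j2 = 2" "j3 < n" "\<pi> ! j3 = 3" by blast+
  have len: "length \<pi> = n" using perm by (rule perm_of_length)
  have pos: "0 < j1" "0 < j2" "0 < j3" using big j by (auto intro!: gr0I)
  have no321: "\<not> (i < j \<and> j < k \<and> k < n \<and> \<pi> ! k < \<pi> ! j \<and> \<pi> ! j < \<pi> ! i)" for i j k
    using assms(3) len unfolding avoids_def contains_321_iff by blast
  have "j1 < j2"
  proof (rule linorder_neqE_nat)
    show "j1 \<noteq> j2" using j by auto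
    show "j2 < j1 \<Longrightarrow> ?thesis" using no321[of 0 j2 j1] j pos big by simp
  qed
  moreover have "j2 < j3"
  proof (rule linorder_neqE_nat)
    show "j2 \<noteq> j3" using j by auto
    show "j3 < j2 \<Longrightarrow> ?thesis" using no321[of 0 j3 j2] j pos big by simp
  qed
  ultimately have "0 < j1 \<and> j1 < j2 \<and> j2 < j3 \<and> j3 < length \<pi> \<and>
      \<pi> ! j1 < \<pi> ! j2 \<and> \<pi> ! j2 < \<pi> ! j3 \<and> \<pi> ! j3 < \<pi> ! 0"
    using j pos big len by simp
  then show False using assms(4) unfolding avoids_def contains_4123_iff by blast
qed

lemma second_entry_if_first_2:
  assumes perm: "perm_of n \<pi>" and "fishburn \<pi>" "0 < n" "\<pi> ! 0 = 2"
  shows "\<pi> ! 1 = 1"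
proof -
  have len: "length \<pi> = n" using perm by (rule perm_of_length)
  have "2 \<le> n" using perm_of_nth_mem[OF perm \<open>0 < n\<close>] assms(4) by simp
  obtain j where j: "j < n" "\<pi> ! j = 1" using perm_of_index[OF perm, of 1] \<open>0 < n\<close> by auto
  then have "0 < j" using assms(4) by (auto intro!: gr0I)
  then have "\<not> \<pi> ! 0 < \<pi> ! 1"
    using fishburn_no_ascent_after[OF assms(2), of 0 j] j len \<open>2 \<le> n\<close> assms(4) by simp
  moreover have "\<pi> ! 1 \<noteq> \<pi> ! 0" using perm_of_nth_eq_iff[OF perm, of 1 0] \<open>2 \<le> n\<close> by simp
  moreover have "1 \<le> \<pi> ! 1" using perm_of_nth_mem[OF perm, of 1] \<open>2 \<le> n\<close> by simp
  ultimately show ?thesis using assms(4) by simp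
qed

lemma second_entry_if_first_3:
  assumes perm: "perm_of n \<pi>" and "fishburn \<pi>" "0 < n" "avoids \<pi> [3,2,1]" and first: "\<pi> ! 0 = 3"
  shows "\<pi> ! 1 = 1"
proof -
  have len: "length \<pi> = n" using perm by (rule perm_of_length)
  have "3 \<le> n" using perm_of_nth_mem[OF perm \<open>0 < n\<close>] first by simp
  then have mem: "1 \<in> {1..n}" "2 \<in> {1..n}" by auto
  obtain j1 where j1: "j1 < n" "\<pi> ! j1 = 1" by (rule perm_of_index[OF perm mem(1)])
  obtain j2 where j2: "j2 < n" "\<pi> ! j2 = 2" by (rule perm_of_index[OF perm mem(2)])
  have "0 < j2" using first j2 by (auto intro!: gr0I)
  \<comment> \<open>the Fishburn condition for the pair \<open>3 \<dots> 2\<close> forbids an ascent after the initial \<open>3\<close>\<close>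
  then have "\<not> \<pi> ! 0 < \<pi> ! 1"
    using fishburn_no_ascent_after[OF assms(2), of 0 j2] j2 len \<open>3 \<le> n\<close> first by simp
  moreover have "\<pi> ! 1 \<noteq> 3" using perm_of_nth_eq_iff[OF perm, of 1 0] first \<open>3 \<le> n\<close> by simp
  moreover have "\<pi> ! 1 \<noteq> 2"
  proof
    assume "\<pi> ! 1 = 2"
    moreover have "j1 \<noteq> 0" "j1 \<noteq> 1" using j1 first \<open>\<pi> ! 1 = 2\<close> by (intro notI, simp)+
    ultimately have "1 < j1" by simp
    then have "(0::nat) < 1 \<and> 1 < j1 \<and> j1 < length \<pi> \<and> \<pi> ! j1 < \<pi> ! 1 \<and> \<pi> ! 1 < \<pi> ! 0"
      using j1 len first \<open>\<pi> ! 1 = 2\<close> by simp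
    then show False using assms(4) unfolding avoids_def contains_321_iff by blast
  qed
  moreover have "1 \<le> \<pi> ! 1" using perm_of_nth_mem[OF perm, of 1] \<open>3 \<le> n\<close> by simp
  ultimately show ?thesis using first by linarith
qed

lemma last_entry_if_first_3_1:
  assumes perm: "perm_of n \<pi>" and "3 \<le> n" "avoids \<pi> [3,1,2,4]" "\<pi> ! 0 = 3" "\<pi> ! 1 = 1"
  shows "\<pi> ! (n - 1) = 2"
proof (rule ccontr)
  assume last: "\<pi> ! (n - 1) \<noteq> 2"
  have len: "length \<pi> = n" using perm by (rule perm_of_length)
  have inj: "\<pi> ! i = \<pi> ! j \<longleftrightarrow> i = j" if "i < n" "j < n" for i j
    using perm_of_nth_eq_iff[OF perm that] .
  obtain j where j: "j < n" "\<pi> ! j = 2" using perm_of_index[OF perm, of 2] \<open>3 \<le> n\<close> by auto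
  then have "j \<noteq> n - 1" "j \<noteq> 1" "j \<noteq> 0" using last assms(4,5) by (intro notI, simp)+
  then have "1 < j" "j < n - 1" using j by auto
  moreover have "3 < \<pi> ! (n - 1)"
    using perm_of_nth_mem[OF perm, of "n - 1"] inj[of "n - 1" 1] inj[of "n - 1" 0] last assms(3-5)
      \<open>1 < j\<close> \<open>j < n - 1\<close> by auto
  ultimately have "(0::nat) < 1 \<and> 1 < j \<and> j < n - 1 \<and> n - 1 < length \<pi> \<and>
      \<pi> ! 1 < \<pi> ! j \<and> \<pi> ! j < \<pi> ! 0 \<and> \<pi> ! 0 < \<pi> ! (n - 1)"
    using j assms(4,5) len by simp
  then show False using assms(3) unfolding avoids_def contains_3124_iff by blast
qed

lemma eq_special_perm_if_first_3:
  assumes perm: "perm_of n \<pi>" and "fishburn \<pi>" "0 < n" "avoids \<pi> [3,2,1]" "avoids \<pi> [3,1,2,4]"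
    and first: "\<pi> ! 0 = 3"
  shows "\<pi> = special_perm n"
proof -
  have "3 \<le> n" using perm_of_nth_mem[OF perm \<open>0 < n\<close>] first by simp
  have second: "\<pi> ! 1 = 1" using second_entry_if_first_3[OF perm assms(2,3,4) first] .
  have last: "\<pi> ! (n - 1) = 2" using last_entry_if_first_3_1[OF perm \<open>3 \<le> n\<close> assms(5) first second] .
  have "\<pi> ! i < \<pi> ! j" if "2 \<le> i" "i < j" "j < n - 1" for i j
  proof (rule ccontr)
    assume "\<not> \<pi> ! i < \<pi> ! j"
    moreover have "\<pi> ! i \<noteq> \<pi> ! j" using perm_of_nth_eq_iff[OF perm, of i j] that by simp
    ultimately have "\<pi> ! j < \<pi> ! i" by simp
    moreover have "2 < \<pi> ! j"
    proof -
      have "j < n" using that(3) by simp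
      moreover have "\<pi> ! j \<noteq> 1" "\<pi> ! j \<noteq> 2"
        using perm_of_nth_eq_iff[OF perm, of j 1] perm_of_nth_eq_iff[OF perm, of j "n - 1"] second last that
        by auto
      ultimately show ?thesis using perm_of_nth_mem[OF perm, of j] by fastforce
    qed
    ultimately have "i < j \<and> j < n - 1 \<and> n - 1 < length \<pi> \<and> \<pi> ! (n - 1) < \<pi> ! j \<and> \<pi> ! j < \<pi> ! i"
      using that last perm_of_length[OF perm] by simp
    then show False using assms(4) unfolding avoids_def contains_321_iff by blast
  qed
  then show ?thesis using eq_special_permI[OF perm \<open>3 \<le> n\<close> first second last] by blast
qed

lemma Fish_av_classification:
  assumes "\<pi> \<in> Fish_av n patterns" "0 < n"
  shows "(\<exists>\<sigma>. \<pi> = [1] \<oplus> \<sigma>) \<or> (\<exists>\<sigma>. \<pi> = [2,1] \<oplus> \<sigma>) \<or> 3 \<le> n \<and> \<pi> = special_perm n"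
proof -
  have perm: "perm_of n \<pi>" and fish: "fishburn \<pi>" and av: "avoids \<pi> [3,2,1]" "avoids \<pi> [3,1,2,4]" "avoids \<pi> [4,1,2,3]"
    using assms(1) unfolding Fish_av_def by auto
  have len: "length \<pi> = n" using perm by (rule perm_of_length)
  have "1 \<le> \<pi> ! 0" using perm_of_nth_mem[OF perm assms(2)] by simp
  moreover have "\<pi> ! 0 \<le> 3" using first_entry_le_3[OF perm assms(2) av(1,3)] .
  ultimately consider "\<pi> ! 0 = 1" | "\<pi> ! 0 = 2" | "\<pi> ! 0 = 3" by linarith
  then show ?thesis
  proof cases
    case 1
    then have "take 1 \<pi> = [1]" using len assms(2) by (cases \<pi>) auto
    then have "\<pi> = [1] \<oplus> map (\<lambda>x. x - 1) (drop 1 \<pi>)"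
      using direct_sum_take_drop[OF perm, of 1] assms(2) by simp
    then show ?thesis by blast
  next
    case 2
    moreover have "\<pi> ! 1 = 1" using second_entry_if_first_2[OF perm fish assms(2) 2] .
    moreover have "2 \<le> n" using perm_of_nth_mem[OF perm assms(2)] 2 by simp
    ultimately have "take 2 \<pi> = [2, 1]" using len by (simp add: numeral_2_eq_2 take_Suc_conv_app_nth)
    moreover have "set [2, 1] = {1..2::nat}" by auto
    ultimately have "\<pi> = [2, 1] \<oplus> map (\<lambda>x. x - 2) (drop 2 \<pi>)"
      using direct_sum_take_drop[OF perm \<open>2 \<le> n\<close>] by simp
    then show ?thesis by blast
  next
    case 3
    then have "3 \<le> n" using perm_of_nth_mem[OF perm assms(2)] by simp
    then show ?thesis using eq_special_perm_if_first_3[OF perm fish assms(2) av(1,2) 3] by blast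
  qed
qed

lemma patterns_descend:
  assumes "k \<le> 2"
  shows "\<forall>p\<in>set patterns. \<exists>a<length p. k \<le> a \<and> p ! a < p ! 0"
proof
  fix p assume "p \<in> set patterns"
  then have "2 < length p \<and> p ! 2 < p ! 0" by auto
  then show "\<exists>a<length p. k \<le> a \<and> p ! a < p ! 0" using assms by blast
qed

lemma Fish_av_prefix_1: "[1] \<oplus> \<sigma> \<in> Fish_av (Suc n) patterns \<longleftrightarrow> \<sigma> \<in> Fish_av n patterns"
proof -
  have "perm_of (length [1::nat]) [1]" "fishburn [1]" "length [1::nat] \<le> Suc n"
    by (auto simp: perm_of_def fishburn_def)
  from Fish_av_direct_sum[OF this patterns_descend] show ?thesis by simp
qed

lemma Fish_av_prefix_21: "[2,1] \<oplus> \<sigma> \<in> Fish_av (Suc (Suc n)) patterns \<longleftrightarrow> \<sigma> \<in> Fish_av n patterns"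
proof -
  have "perm_of (length [2,1::nat]) [2,1]" "fishburn [2,1]" "length [2,1::nat] \<le> Suc (Suc n)"
    by (auto simp: perm_of_def fishburn_def less_2_cases_iff)
  from Fish_av_direct_sum[OF this patterns_descend] show ?thesis by simp
qed

lemma Fish_av_0: "Fish_av 0 patterns = {[]}"
  by (auto simp: Fish_av_def perm_of_def fishburn_def avoids_def contains_def)

lemma Fish_av_1: "Fish_av (Suc 0) patterns = {[1]}"
proof -
  have "\<pi> = [1]" if perm: "perm_of (Suc 0) \<pi>" for \<pi>
  proof -
    obtain x where "\<pi> = [x]" using perm_of_length[OF perm] by (metis One_nat_def length_0_conv length_Suc_conv)
    with perm show ?thesis by (simp add: perm_of_def)
  qed
  moreover have "[1] \<in> Fish_av (Suc 0) patterns"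
    using Fish_av_prefix_1[of "[]" 0] Fish_av_0 by (simp add: direct_sum_def)
  ultimately show ?thesis unfolding Fish_av_def by blast
qed

lemma Fish_av_Suc_Suc:
  "Fish_av (Suc (Suc n)) patterns =
     (\<oplus>) [1] ` Fish_av (Suc n) patterns \<union> (\<oplus>) [2,1] ` Fish_av n patterns \<union>
     (if n = 0 then {} else {special_perm (Suc (Suc n))})"
proof (intro equalityI subsetI)
  fix \<pi> assume \<pi>: "\<pi> \<in> Fish_av (Suc (Suc n)) patterns"
  from Fish_av_classification[OF \<pi>]
  consider \<sigma> where "\<pi> = [1] \<oplus> \<sigma>" | \<sigma> where "\<pi> = [2,1] \<oplus> \<sigma>" | "3 \<le> Suc (Suc n)" "\<pi> = special_perm (Suc (Suc n))"
    by auto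
  then show "\<pi> \<in> (\<oplus>) [1] ` Fish_av (Suc n) patterns \<union> (\<oplus>) [2,1] ` Fish_av n patterns \<union>
     (if n = 0 then {} else {special_perm (Suc (Suc n))})"
  proof cases
    case (1 \<sigma>)
    then show ?thesis using \<pi> Fish_av_prefix_1 by auto
  next
    case (2 \<sigma>)
    then show ?thesis using \<pi> Fish_av_prefix_21 by auto
  qed auto
next
  fix \<pi> assume "\<pi> \<in> (\<oplus>) [1] ` Fish_av (Suc n) patterns \<union> (\<oplus>) [2,1] ` Fish_av n patterns \<union>
     (if n = 0 then {} else {special_perm (Suc (Suc n))})"
  then show "\<pi> \<in> Fish_av (Suc (Suc n)) patterns"
    using Fish_av_prefix_1 Fish_av_prefix_21 special_perm_in_Fish_av[of "Suc (Suc n)"]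
    by (auto split: if_splits)
qed

lemma finite_Fish_av: "finite (Fish_av n ps)"
proof (rule finite_subset)
  show "Fish_av n ps \<subseteq> {xs. set xs \<subseteq> {1..n} \<and> length xs = n}"
    using perm_of_length unfolding Fish_av_def perm_of_def by auto
  show "finite {xs. set xs \<subseteq> {1..n} \<and> length xs = n}"
    by (rule finite_lists_length_eq) simp
qed

lemma card_Fish_av_Suc_Suc:
  "card (Fish_av (Suc (Suc n)) patterns) =
     card (Fish_av (Suc n) patterns) + card (Fish_av n patterns) + (if n = 0 then 0 else 1)"
proof -
  let ?A = "(\<oplus>) [1] ` Fish_av (Suc n) patterns" and ?B = "(\<oplus>) [2,1] ` Fish_av n patterns"
    and ?C = "if n = 0 then {} else {special_perm (Suc (Suc n))}"
  have hd: "hd ` ?A \<subseteq> {1}" "hd ` ?B \<subseteq> {2}" "hd ` ?C \<subseteq> {3}"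
    by (auto simp: direct_sum_def special_perm_def)
  have "?A \<inter> ?B = {}" "(?A \<union> ?B) \<inter> ?C = {}"
    using hd by fastforce+
  moreover have "card ?A = card (Fish_av (Suc n) patterns)" "card ?B = card (Fish_av n patterns)"
    by (simp_all add: card_image[OF inj_on_direct_sum])
  ultimately show ?thesis
    unfolding Fish_av_Suc_Suc by (simp add: card_Un_disjoint finite_Fish_av)
qed

lemma card_Fish_av_Suc: "card (Fish_av (Suc n) patterns) + 1 = fib1 (n + 2)"
proof (induction n rule: fib1.induct)
  case 1
  show ?case using Fish_av_1 by simp
next
  case 2
  show ?case using card_Fish_av_Suc_Suc[of 0] Fish_av_0 Fish_av_1 by simp
next
  case (3 n)
  then show ?case using card_Fish_av_Suc_Suc[of "Suc n"] by simp
qed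

theorem mainTheorem15:
  fixes n :: nat
  assumes "n \<ge> 1"
  shows "card (Fish_av n [[3,2,1],[3,1,2,4],[4,1,2,3]]) = fib1 (n + 1) - 1"
proof -
  obtain m where "n = Suc m" using assms by (cases n) auto
  then show ?thesis using card_Fish_av_Suc[of m] by simp
qed

end
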